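(* Let $\mathcal{A}$ be a finite-dimensional Hopf algebra over $\mathbb{C}$ with coproduct $\Delta$, let $\Pi_{\phi}:\mathcal{A}\to\mathrm{End}(V)$ be a representation of $\mathcal{A}$ on a vector space $V$, and let $|\phi_r\rangle\in V$. Define $$\mathcal{T}_r=\{a\in\mathcal{A} : (\mathrm{id}\otimes\Pi_{\phi})\Delta(a)\,(1\otimes|\phi_r\rangle)=a\otimes|\phi_r\rangle\},$$ where both sides are elements of $\mathcal{A}\otimes V$. Then $\mathcal{T}_r$ is a subalgebra of $\mathcal{A}$, and moreover: (1) $\Delta(\mathcal{T}_r)\subset\mathcal{A}\otimes\mathcal{T}_r$; (2) for every $a\in\mathcal{T}_r$, $(\mathrm{id}\otimes\Pi_{\phi}\otimes\Pi_{\phi})(\mathrm{id}\otimes\Delta)\Delta(a)\,(1\otimes|\phi_r\rangle\otimes|\phi_r\rangle)=a\otimes|\phi_r\rangle\otimes|\phi_r\rangle$.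
   Context: In $(\mathrm{id}\otimes\Pi_{\phi})\Delta(a)(1\otimes|\phi_r\rangle)$, writing $\Delta(a)=\sum a^{(1)}\otimes a^{(2)}$, the expression means $\sum a^{(1)}\otimes\Pi_{\phi}(a^{(2)})|\phi_r\rangle\in\mathcal{A}\otimes V$; analogously for the triple tensor expression. *)

theory Defs
  imports Complex_Main
begin

(* Coordinates: A is finite-dimensional with basis indexed by the finite type 'i;
   an element of A is its coordinate function 'i => complex.
   V is modelled (via a Hamel basis indexed by 'j) as finitely supported
   functions 'j => complex.  A (x) V is then 'i => 'j => complex (coordinates
   w.r.t. e_i (x) f_j), A (x) A is 'i => 'i => complex, etc. *)

definition amult :: "('i::finite \<Rightarrow> 'i \<Rightarrow> 'i \<Rightarrow> complex) \<Rightarrow> ('i \<Rightarrow> complex) \<Rightarrow> ('i \<Rightarrow> complex) \<Rightarrow> ('i \<Rightarrow> complex)"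
  where "amult mu x y = (\<lambda>k. \<Sum>i\<in>UNIV. \<Sum>j\<in>UNIV. x i * y j * mu i j k)"

definition coprod :: "('i::finite \<Rightarrow> 'i \<Rightarrow> 'i \<Rightarrow> complex) \<Rightarrow> ('i \<Rightarrow> complex) \<Rightarrow> ('i \<Rightarrow> 'i \<Rightarrow> complex)"
  where "coprod delta x = (\<lambda>i j. \<Sum>k\<in>UNIV. x k * delta k i j)"

definition counit_app :: "('i::finite \<Rightarrow> complex) \<Rightarrow> ('i \<Rightarrow> complex) \<Rightarrow> complex"
  where "counit_app eps x = (\<Sum>i\<in>UNIV. x i * eps i)"

(* Hopf algebra axioms in coordinates; S i k = k-th coordinate of S(e_i) *)
definition is_hopf_algebra ::
  "('i::finite \<Rightarrow> 'i \<Rightarrow> 'i \<Rightarrow> complex) \<Rightarrow> ('i \<Rightarrow> complex) \<Rightarrow> ('i \<Rightarrow> 'i \<Rightarrow> 'i \<Rightarrow> complex)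
   \<Rightarrow> ('i \<Rightarrow> complex) \<Rightarrow> ('i \<Rightarrow> 'i \<Rightarrow> complex) \<Rightarrow> bool"
  where "is_hopf_algebra mu one delta eps S \<longleftrightarrow>
    (\<forall>x y z. amult mu (amult mu x y) z = amult mu x (amult mu y z)) \<and>
    (\<forall>x. amult mu one x = x \<and> amult mu x one = x) \<and>
    (\<forall>x i j m. (\<Sum>l\<in>UNIV. coprod delta x l m * delta l i j)
              = (\<Sum>l\<in>UNIV. coprod delta x i l * delta l j m)) \<and>
    (\<forall>x j. (\<Sum>i\<in>UNIV. eps i * coprod delta x i j) = x j) \<and>
    (\<forall>x i. (\<Sum>j\<in>UNIV. coprod delta x i j * eps j) = x i) \<and>
    (\<forall>x y i j. coprod delta (amult mu x y) i j =
        (\<Sum>i1\<in>UNIV. \<Sum>i2\<in>UNIV. \<Sum>j1\<in>UNIV. \<Sum>j2\<in>UNIV.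
           coprod delta x i1 j1 * coprod delta y i2 j2 * mu i1 i2 i * mu j1 j2 j)) \<and>
    (\<forall>i j. coprod delta one i j = one i * one j) \<and>
    (\<forall>x y. counit_app eps (amult mu x y) = counit_app eps x * counit_app eps y) \<and>
    counit_app eps one = 1 \<and>
    (\<forall>x k. (\<Sum>i\<in>UNIV. \<Sum>j\<in>UNIV. coprod delta x i j * (\<Sum>p\<in>UNIV. S i p * mu p j k))
           = counit_app eps x * one k) \<and>
    (\<forall>x k. (\<Sum>i\<in>UNIV. \<Sum>j\<in>UNIV. coprod delta x i j * (\<Sum>q\<in>UNIV. S j q * mu i q k))
           = counit_app eps x * one k)"

definition fin_vec :: "('j \<Rightarrow> complex) \<Rightarrow> bool"
  where "fin_vec v \<longleftrightarrow> finite {j. v j \<noteq> 0}"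

(* Pi i = Pi_phi(e_i); Pi_phi(x) = sum_i x_i Pi i.  Representation of A on V. *)
definition is_representation ::
  "('i::finite \<Rightarrow> 'i \<Rightarrow> 'i \<Rightarrow> complex) \<Rightarrow> ('i \<Rightarrow> complex) \<Rightarrow> ('i \<Rightarrow> ('j \<Rightarrow> complex) \<Rightarrow> ('j \<Rightarrow> complex)) \<Rightarrow> bool"
  where "is_representation mu one Pi \<longleftrightarrow>
    (\<forall>i v. fin_vec v \<longrightarrow> fin_vec (Pi i v)) \<and>
    (\<forall>i v w. fin_vec v \<longrightarrow> fin_vec w \<longrightarrow> Pi i (\<lambda>k. v k + w k) = (\<lambda>k. Pi i v k + Pi i w k)) \<and>
    (\<forall>i c v. fin_vec v \<longrightarrow> Pi i (\<lambda>k. c * v k) = (\<lambda>k. c * Pi i v k)) \<and>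
    (\<forall>i j v. fin_vec v \<longrightarrow> Pi i (Pi j v) = (\<lambda>k. \<Sum>l\<in>UNIV. mu i j l * Pi l v k)) \<and>
    (\<forall>v. fin_vec v \<longrightarrow> (\<lambda>k. \<Sum>l\<in>UNIV. one l * Pi l v k) = v)"

definition stab_set :: "('i::finite \<Rightarrow> 'i \<Rightarrow> 'i \<Rightarrow> complex) \<Rightarrow> ('i \<Rightarrow> ('j \<Rightarrow> complex) \<Rightarrow> ('j \<Rightarrow> complex))
   \<Rightarrow> ('j \<Rightarrow> complex) \<Rightarrow> ('i \<Rightarrow> complex) set"
  where "stab_set delta Pi phi =
    {a. \<forall>i k. (\<Sum>j\<in>UNIV. coprod delta a i j * Pi j phi k) = a i * phi k}"

definition is_subalgebra :: "('i::finite \<Rightarrow> 'i \<Rightarrow> 'i \<Rightarrow> complex) \<Rightarrow> ('i \<Rightarrow> complex) \<Rightarrow> ('i \<Rightarrow> complex) set \<Rightarrow> bool"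
  where "is_subalgebra mu one T \<longleftrightarrow>
    (\<lambda>_. 0) \<in> T \<and> one \<in> T \<and>
    (\<forall>x\<in>T. \<forall>y\<in>T. (\<lambda>k. x k + y k) \<in> T) \<and>
    (\<forall>c. \<forall>x\<in>T. (\<lambda>k. c * x k) \<in> T) \<and>
    (\<forall>x\<in>T. \<forall>y\<in>T. amult mu x y \<in> T)"

end

theory Submission
  imports Defs
begin

text \<open>
  Write \<open>\<rho>(a) = (id \<otimes> \<Pi>)\<Delta>(a)(1 \<otimes> \<phi>)\<close>, so that \<open>T\<^sub>r\<close> is the set where \<open>\<rho>(a) = a \<otimes> \<phi>\<close>.
  Since \<open>\<Delta>\<close> and \<open>\<Pi>\<close> are multiplicative, \<open>\<rho>(ab)\<close> is obtained by letting \<open>\<Delta>(a)\<close> act on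
  \<open>\<rho>(b) = b \<otimes> \<phi>\<close>, which gives \<open>ab \<otimes> \<phi>\<close>; and \<open>\<Delta>(1) = 1 \<otimes> 1\<close>, \<open>\<Pi>(1) = id\<close> give \<open>1 \<in> T\<^sub>r\<close>.
  By coassociativity, applying \<open>\<rho>\<close> to the right leg of \<open>\<Delta>(a)\<close> is the same as applying
  \<open>\<Delta> \<otimes> id\<close> to \<open>\<rho>(a) = a \<otimes> \<phi>\<close>, which yields \<open>\<Delta>(a) \<otimes> \<phi>\<close>: the right leg of \<open>\<Delta>(a)\<close> lies
  in \<open>T\<^sub>r\<close>. The iterated identity then follows by using the defining equation first for
  that leg and then for \<open>a\<close>.
\<close>

lemma fin_vec_sum:
  assumes "finite A" and "\<And>l. l \<in> A \<Longrightarrow> fin_vec (v l)"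
  shows "fin_vec (\<lambda>k. \<Sum>l\<in>A. c l * v l k)"
proof -
  have "{k. (\<Sum>l\<in>A. c l * v l k) \<noteq> 0} \<subseteq> (\<Union>l\<in>A. {k. v l k \<noteq> 0})"
    by (auto intro: ccontr dest: sum.not_neutral_contains_not_neutral)
  then show ?thesis
    using assms unfolding fin_vec_def by (auto intro: finite_subset)
qed

lemma representation_sum:
  assumes rep: "is_representation mu one Pi"
    and "finite A" and "\<And>l. l \<in> A \<Longrightarrow> fin_vec (v l)"
  shows "Pi i (\<lambda>k. \<Sum>l\<in>A. c l * v l k) = (\<lambda>k. \<Sum>l\<in>A. c l * Pi i (v l) k)"
  using assms(2,3)
proof (induction A rule: finite_induct)
  case empty
  have "fin_vec (\<lambda>k. 0)"
    by (simp add: fin_vec_def)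
  then have "Pi i (\<lambda>k. 0 * 0) = (\<lambda>k. 0 * Pi i (\<lambda>k. 0) k)"
    using rep unfolding is_representation_def by blast
  then show ?case by simp
next
  case (insert x F)
  have "fin_vec (\<lambda>k. c x * v x k)" and "fin_vec (\<lambda>k. \<Sum>l\<in>F. c l * v l k)"
    using fin_vec_sum[of "{x}" v c] fin_vec_sum[of F v c] insert by auto
  with rep insert show ?case
    unfolding is_representation_def by (simp add: fun_eq_iff)
qed

lemma one_in_stab_set:
  assumes coprod_one: "\<And>i j. coprod delta one i j = one i * one j"
    and rep: "is_representation mu one Pi" and "fin_vec phi"
  shows "one \<in> stab_set delta Pi phi"
proof -
  have "(\<Sum>j\<in>UNIV. one j * Pi j phi k) = phi k" for k
    using rep \<open>fin_vec phi\<close> unfolding is_representation_def by (metis (no_types))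
  then show ?thesis
    unfolding stab_set_def by (simp add: coprod_one mult.assoc flip: sum_distrib_left)
qed

lemma amult_in_stab_set:
  assumes coprod_amult: "\<And>x y i j. coprod delta (amult mu x y) i j =
        (\<Sum>i1\<in>UNIV. \<Sum>i2\<in>UNIV. \<Sum>j1\<in>UNIV. \<Sum>j2\<in>UNIV.
           coprod delta x i1 j1 * coprod delta y i2 j2 * mu i1 i2 i * mu j1 j2 j)"
    and rep: "is_representation mu one Pi" and phi: "fin_vec phi"
    and x: "x \<in> stab_set delta Pi phi" and y: "y \<in> stab_set delta Pi phi"
  shows "amult mu x y \<in> stab_set delta Pi phi"
proof -
  have Pi_phi: "fin_vec (Pi j phi)" for j
    using rep phi unfolding is_representation_def by blast
  have Pi_mult: "(\<Sum>j\<in>UNIV. mu j1 j2 j * Pi j phi k) = Pi j1 (Pi j2 phi) k" for j1 j2 k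
    using rep phi unfolding is_representation_def by simp
  have x_act: "(\<Sum>j1\<in>UNIV. coprod delta x i1 j1 * Pi j1 phi k) = x i1 * phi k" for i1 k
    using x unfolding stab_set_def by simp
  have y_act: "(\<Sum>j2\<in>UNIV. coprod delta y i2 j2 * Pi j1 (Pi j2 phi) k) = y i2 * Pi j1 phi k"
    for i2 j1 k
  proof -
    have "Pi j1 (\<lambda>k. \<Sum>j2\<in>UNIV. coprod delta y i2 j2 * Pi j2 phi k)
        = (\<lambda>k. \<Sum>j2\<in>UNIV. coprod delta y i2 j2 * Pi j1 (Pi j2 phi) k)"
      by (rule representation_sum[OF rep]) (simp_all add: Pi_phi)
    moreover have "Pi j1 (\<lambda>k. y i2 * phi k) = (\<lambda>k. y i2 * Pi j1 phi k)"
      using rep phi unfolding is_representation_def by blast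
    ultimately show ?thesis
      using y unfolding stab_set_def by (simp add: fun_eq_iff)
  qed
  have "(\<Sum>j\<in>UNIV. coprod delta (amult mu x y) i j * Pi j phi k) = amult mu x y i * phi k" for i k
  proof -
    have "(\<Sum>j\<in>UNIV. coprod delta (amult mu x y) i j * Pi j phi k)
        = (\<Sum>i1\<in>UNIV. \<Sum>i2\<in>UNIV. \<Sum>j1\<in>UNIV. \<Sum>j2\<in>UNIV.
             coprod delta x i1 j1 * coprod delta y i2 j2 * mu i1 i2 i *
             (\<Sum>j\<in>UNIV. mu j1 j2 j * Pi j phi k))"
      unfolding coprod_amult sum_distrib_left sum_distrib_right
      by (subst sum.swap, rule sum.cong[OF refl])+ (simp add: mult.assoc)
    also have "\<dots> = (\<Sum>i1\<in>UNIV. \<Sum>i2\<in>UNIV. mu i1 i2 i *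
        (\<Sum>j1\<in>UNIV. coprod delta x i1 j1 * (\<Sum>j2\<in>UNIV. coprod delta y i2 j2 * Pi j1 (Pi j2 phi) k)))"
      by (simp only: Pi_mult) (simp add: sum_distrib_left mult_ac)
    also have "\<dots> = (\<Sum>i1\<in>UNIV. \<Sum>i2\<in>UNIV. mu i1 i2 i * y i2 *
        (\<Sum>j1\<in>UNIV. coprod delta x i1 j1 * Pi j1 phi k))"
      by (simp add: y_act sum_distrib_left mult_ac)
    also have "\<dots> = (\<Sum>i1\<in>UNIV. \<Sum>i2\<in>UNIV. x i1 * y i2 * mu i1 i2 i) * phi k"
      by (simp only: x_act) (simp add: sum_distrib_left sum_distrib_right mult_ac)
    finally show ?thesis
      unfolding amult_def by simp
  qed
  then show ?thesis
    unfolding stab_set_def by simp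
qed

lemma is_subalgebra_stab_set:
  assumes coprod_one: "\<And>i j. coprod delta one i j = one i * one j"
    and coprod_amult: "\<And>x y i j. coprod delta (amult mu x y) i j =
        (\<Sum>i1\<in>UNIV. \<Sum>i2\<in>UNIV. \<Sum>j1\<in>UNIV. \<Sum>j2\<in>UNIV.
           coprod delta x i1 j1 * coprod delta y i2 j2 * mu i1 i2 i * mu j1 j2 j)"
    and rep: "is_representation mu one Pi" and phi: "fin_vec phi"
  shows "is_subalgebra mu one (stab_set delta Pi phi)"
proof -
  have "(\<lambda>k. x k + y k) \<in> stab_set delta Pi phi"
    if "x \<in> stab_set delta Pi phi" "y \<in> stab_set delta Pi phi" for x y
    using that by (simp add: stab_set_def coprod_def distrib_right sum.distrib)
  moreover have "(\<lambda>k. c * x k) \<in> stab_set delta Pi phi" if "x \<in> stab_set delta Pi phi" for c x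
  proof -
    have "coprod delta (\<lambda>k. c * x k) i j = c * coprod delta x i j" for i j
      unfolding coprod_def by (simp add: sum_distrib_left mult.assoc)
    with that show ?thesis
      by (simp add: stab_set_def mult.assoc flip: sum_distrib_left)
  qed
  ultimately show ?thesis
    unfolding is_subalgebra_def
    using one_in_stab_set[OF coprod_one rep phi] amult_in_stab_set[OF coprod_amult rep phi]
    by (simp add: stab_set_def coprod_def)
qed

lemma coprod_row_in_stab_set:
  assumes coassoc: "\<And>x i j m. (\<Sum>l\<in>UNIV. coprod delta x l m * delta l i j)
      = (\<Sum>l\<in>UNIV. coprod delta x i l * delta l j m)"
    and a: "a \<in> stab_set delta Pi phi"
  shows "(\<lambda>j. coprod delta a i j) \<in> stab_set delta Pi phi"
proof -
  have "(\<Sum>j\<in>UNIV. coprod delta (\<lambda>j. coprod delta a i j) i' j * Pi j phi k)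
      = coprod delta a i i' * phi k" for i' k
  proof -
    have "(\<Sum>j\<in>UNIV. coprod delta (\<lambda>j. coprod delta a i j) i' j * Pi j phi k)
        = (\<Sum>j\<in>UNIV. (\<Sum>l\<in>UNIV. coprod delta a l j * delta l i i') * Pi j phi k)"
      unfolding coprod_def[of delta "\<lambda>j. coprod delta a i j"] coassoc ..
    also have "\<dots> = (\<Sum>l\<in>UNIV. delta l i i' * (\<Sum>j\<in>UNIV. coprod delta a l j * Pi j phi k))"
      unfolding sum_distrib_left sum_distrib_right by (subst sum.swap) (simp add: mult_ac)
    also have "\<dots> = coprod delta a i i' * phi k"
      using a unfolding stab_set_def coprod_def by (simp add: sum_distrib_left mult_ac)
    finally show ?thesis .
  qed
  then show ?thesis
    unfolding stab_set_def by simp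
qed

lemma iterated_coprod_action_stab_set:
  assumes a: "a \<in> stab_set delta Pi phi"
    and rows: "\<And>i. (\<lambda>j. coprod delta a i j) \<in> stab_set delta Pi phi"
  shows "(\<Sum>j\<in>UNIV. \<Sum>m\<in>UNIV. (\<Sum>l\<in>UNIV. coprod delta a i l * delta l j m) * Pi j phi k * Pi m phi k')
       = a i * phi k * phi k'"
proof -
  have "(\<Sum>j\<in>UNIV. \<Sum>m\<in>UNIV. (\<Sum>l\<in>UNIV. coprod delta a i l * delta l j m) * Pi j phi k * Pi m phi k')
      = (\<Sum>j\<in>UNIV. Pi j phi k *
          (\<Sum>m\<in>UNIV. coprod delta (\<lambda>l. coprod delta a i l) j m * Pi m phi k'))"
    unfolding coprod_def[of delta "\<lambda>l. coprod delta a i l"] by (simp add: sum_distrib_left mult_ac)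
  also have "\<dots> = phi k' * (\<Sum>j\<in>UNIV. coprod delta a i j * Pi j phi k)"
    using rows[of i] unfolding stab_set_def by (simp add: sum_distrib_left mult_ac)
  also have "\<dots> = a i * phi k * phi k'"
    using a unfolding stab_set_def by simp
  finally show ?thesis .
qed

theorem lemma1:
  fixes mu :: "'i::finite \<Rightarrow> 'i \<Rightarrow> 'i \<Rightarrow> complex"
    and one eps :: "'i \<Rightarrow> complex"
    and delta :: "'i \<Rightarrow> 'i \<Rightarrow> 'i \<Rightarrow> complex"
    and S :: "'i \<Rightarrow> 'i \<Rightarrow> complex"
    and Pi :: "'i \<Rightarrow> ('j \<Rightarrow> complex) \<Rightarrow> ('j \<Rightarrow> complex)"
    and phi :: "'j \<Rightarrow> complex"
  assumes "is_hopf_algebra mu one delta eps S"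
    and "is_representation mu one Pi"
    and "fin_vec phi"
  shows "is_subalgebra mu one (stab_set delta Pi phi) \<and>
    (\<forall>a\<in>stab_set delta Pi phi. \<forall>i. (\<lambda>j. coprod delta a i j) \<in> stab_set delta Pi phi) \<and>
    (\<forall>a\<in>stab_set delta Pi phi. \<forall>i k k'.
       (\<Sum>j\<in>UNIV. \<Sum>m\<in>UNIV. (\<Sum>l\<in>UNIV. coprod delta a i l * delta l j m) * Pi j phi k * Pi m phi k')
       = a i * phi k * phi k')"
proof -
  note hopf = assms(1)[unfolded is_hopf_algebra_def]
  have rows: "(\<lambda>j. coprod delta a i j) \<in> stab_set delta Pi phi"
    if "a \<in> stab_set delta Pi phi" for a i
    using that by (rule coprod_row_in_stab_set[rotated]) (use hopf in blast)
  have "is_subalgebra mu one (stab_set delta Pi phi)"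
    using assms(2,3) by (rule is_subalgebra_stab_set[rotated 2]) (use hopf in blast)+
  with rows show ?thesis
    by (blast intro: iterated_coprod_action_stab_set)
qed

end
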